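(* Let $(V_1,V_2)$ be a pair of commuting isometries on a Hilbert space with $\operatorname{ran}V_1=\operatorname{ran}V_2$. If $V_1V_2$ is pure, then both $V_1$ and $V_2$ are pure.
   Context: An isometry $T$ is pure if $T^{*n}\to0$ strongly as $n\to\infty$ (equivalently, $T$ is a unilateral shift of some multiplicity). *)

theory Defs
  imports "HOL-Analysis.Analysis"
begin

definition isometry :: "('a::real_normed_vector \<Rightarrow> 'a) \<Rightarrow> bool" where
  "isometry T \<longleftrightarrow> bounded_linear T \<and> (\<forall>x. norm (T x) = norm x)"

definition is_adjoint :: "('a::real_inner \<Rightarrow> 'a) \<Rightarrow> ('a \<Rightarrow> 'a) \<Rightarrow> bool" where
  "is_adjoint T S \<longleftrightarrow> (\<forall>x y. inner (T x) y = inner x (S y))"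

definition pure_isometry :: "('a::real_inner \<Rightarrow> 'a) \<Rightarrow> bool" where
  "pure_isometry T \<longleftrightarrow> isometry T \<and>
     (\<exists>S. is_adjoint T S \<and> (\<forall>x. (\<lambda>n. (S ^^ n) x) \<longlonglongrightarrow> 0))"

end

theory Submission
  imports Defs
begin

text \<open>For an isometry \<open>T\<close> with adjoint \<open>T\<^sup>*\<close>, the vector \<open>T T\<^sup>* x\<close> is the orthogonal
  projection of \<open>x\<close> onto \<open>ran T\<close>, so \<open>\<parallel>T\<^sup>* x\<parallel>\<close> depends only on \<open>ran T\<close>. Commutation and
  \<open>ran V\<^sub>1 = ran V\<^sub>2\<close> give \<open>ran V\<^sub>1\<^sup>2\<^sup>n = ran (V\<^sub>1V\<^sub>2)\<^sup>n\<close>, hence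
  \<open>\<parallel>V\<^sub>1\<^sup>*\<^sup>2\<^sup>n x\<parallel> = \<parallel>(V\<^sub>1V\<^sub>2)\<^sup>*\<^sup>n x\<parallel> \<longrightarrow> 0\<close>; since \<open>V\<^sub>1\<^sup>*\<close> is a contraction, the whole sequence
  \<open>\<parallel>V\<^sub>1\<^sup>*\<^sup>k x\<parallel>\<close> decreases, so it tends to 0 as well. Adjoints exist because the range of an
  isometry is complete, so the projection theorem applies to it.\<close>

lemma parallelogram_law:
  fixes u v :: "'a::real_inner"
  shows "norm (u + v)^2 + norm (u - v)^2 = 2 * norm u^2 + 2 * norm v^2"
  by (simp add: power2_norm_eq_inner inner_add inner_diff inner_commute)

lemma convex_norm_diff_le_infdist:
  fixes M :: "'a::real_inner set"
  assumes "convex M" "a \<in> M" "b \<in> M"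
  shows "norm (a - b)^2 \<le> 2 * dist x a^2 + 2 * dist x b^2 - 4 * infdist x M^2"
proof -
  have "midpoint a b \<in> M"
    using convexD[OF assms, of "1/2" "1/2"] by (simp add: midpoint_def scaleR_right_distrib)
  then have "infdist x M^2 \<le> dist x (midpoint a b)^2"
    by (simp add: infdist_le infdist_nonneg power_mono)
  moreover have "(x - a) + (x - b) = 2 *\<^sub>R (x - midpoint a b)"
    by (simp add: midpoint_def algebra_simps scaleR_2)
  then have "norm ((x - a) + (x - b))^2 = 4 * dist x (midpoint a b)^2"
    by (simp add: dist_norm power_mult_distrib)
  moreover have "norm ((x - a) - (x - b)) = norm (a - b)"
    by (simp add: norm_minus_commute)
  ultimately show ?thesis
    using parallelogram_law[of "x - a" "x - b"] by (simp add: dist_norm)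
qed

lemma convex_minimizing_sequence_Cauchy:
  fixes M :: "'a::real_inner set"
  assumes "convex M" and mem: "\<And>n. m n \<in> M"
    and lim: "(\<lambda>n. dist x (m n)) \<longlonglongrightarrow> infdist x M"
  shows "Cauchy m"
proof (rule metric_CauchyI)
  fix e :: real assume "e > 0"
  have "(\<lambda>n. dist x (m n)^2 - infdist x M^2) \<longlonglongrightarrow> infdist x M^2 - infdist x M^2"
    by (intro tendsto_intros lim)
  then have "\<forall>\<^sub>F n in sequentially. dist x (m n)^2 - infdist x M^2 < e^2 / 4"
    by (rule order_tendstoD(2)) (use \<open>e > 0\<close> in simp)
  then obtain N where N: "\<And>n. n \<ge> N \<Longrightarrow> dist x (m n)^2 - infdist x M^2 < e^2 / 4"
    unfolding eventually_sequentially by blast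
  have "dist (m a) (m b) < e" if "a \<ge> N" "b \<ge> N" for a b
  proof -
    have "dist (m a) (m b)^2 < e^2"
      using convex_norm_diff_le_infdist[OF \<open>convex M\<close> mem mem, of a b x] N[OF \<open>a \<ge> N\<close>] N[OF \<open>b \<ge> N\<close>]
      by (simp add: dist_norm)
    then show ?thesis
      using \<open>e > 0\<close> by (simp add: power_less_imp_less_base)
  qed
  then show "\<exists>N. \<forall>a\<ge>N. \<forall>b\<ge>N. dist (m a) (m b) < e" by blast
qed

lemma closed_convex_attains_infdist:
  fixes M :: "'a::{real_inner, complete_space} set"
  assumes "closed M" "convex M" "M \<noteq> {}"
  obtains p where "p \<in> M" "dist x p = infdist x M"
proof -
  have "\<exists>y\<in>M. dist x y < infdist x M + inverse (real (Suc n))" for n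
  proof -
    have "(INF y\<in>M. dist x y) < infdist x M + inverse (real (Suc n))"
      using infdist_notempty[OF \<open>M \<noteq> {}\<close>] by simp
    moreover have "bdd_below (dist x ` M)"
      by (rule bdd_belowI2[of _ 0]) simp
    ultimately show ?thesis
      using cINF_less_iff[OF \<open>M \<noteq> {}\<close>] by blast
  qed
  then obtain m where mem: "\<And>n. m n \<in> M"
    and near: "\<And>n. dist x (m n) < infdist x M + inverse (real (Suc n))"
    by metis
  have lim: "(\<lambda>n. dist x (m n)) \<longlonglongrightarrow> infdist x M"
  proof (rule tendsto_sandwich)
    show "\<forall>\<^sub>F n in sequentially. infdist x M \<le> dist x (m n)"
      using mem by (simp add: infdist_le)
    show "\<forall>\<^sub>F n in sequentially. dist x (m n) \<le> infdist x M + inverse (real (Suc n))"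
      using near by (simp add: less_imp_le)
    show "(\<lambda>n. infdist x M + inverse (real (Suc n))) \<longlonglongrightarrow> infdist x M"
      using tendsto_add[OF tendsto_const LIMSEQ_inverse_real_of_nat] by simp
  qed simp
  obtain p where p: "m \<longlonglongrightarrow> p"
    using convex_minimizing_sequence_Cauchy[OF \<open>convex M\<close> mem lim]
    by (auto simp: Cauchy_convergent_iff convergent_def)
  show thesis
  proof
    show "p \<in> M" using closed_sequentially[OF \<open>closed M\<close> _ p] mem by blast
    show "dist x p = infdist x M"
      using LIMSEQ_unique[OF tendsto_dist[OF tendsto_const p] lim] .
  qed
qed

lemma subspace_closest_point_orthogonal:
  fixes M :: "'a::real_inner set"
  assumes "subspace M" "p \<in> M" "dist x p = infdist x M"
  shows "x - p \<in> M\<^sup>\<bottom>"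
  unfolding orthogonal_comp_def
proof (intro CollectI ballI)
  fix m assume "m \<in> M"
  show "orthogonal m (x - p)"
  proof (cases "m = 0")
    case False
    define a where "a = inner m (x - p)"
    define t where "t = a / norm m^2"
    have "norm m^2 > 0" using False by simp
    have "p + t *\<^sub>R m \<in> M"
      using assms(1,2) \<open>m \<in> M\<close> by (simp add: subspace_add subspace_scale)
    then have "norm (x - p) \<le> norm ((x - p) - t *\<^sub>R m)"
      using assms(3) infdist_le[of "p + t *\<^sub>R m" M x] by (simp add: dist_norm algebra_simps)
    then have "norm (x - p)^2 \<le> norm ((x - p) - t *\<^sub>R m)^2"
      by (simp add: power_mono)
    also have "\<dots> = norm (x - p)^2 - 2 * t * a + t^2 * norm m^2"
      unfolding power2_norm_eq_inner a_def
      by (simp add: inner_commute power2_eq_square algebra_simps)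
    also have "\<dots> = norm (x - p)^2 - a^2 / norm m^2"
      using \<open>norm m^2 > 0\<close> by (simp add: t_def power2_eq_square field_simps)
    finally have "a^2 \<le> 0"
      using \<open>norm m^2 > 0\<close> by (simp add: divide_le_0_iff)
    then show ?thesis by (simp add: a_def orthogonal_def)
  qed (simp add: orthogonal_def)
qed

lemma closed_subspace_orthogonal_decomposition:
  fixes M :: "'a::{real_inner, complete_space} set"
  assumes "closed M" "subspace M"
  obtains p where "p \<in> M" "x - p \<in> M\<^sup>\<bottom>"
proof -
  have "M \<noteq> {}" using subspace_0[OF \<open>subspace M\<close>] by blast
  with assms obtain p where "p \<in> M" "dist x p = infdist x M"
    using closed_convex_attains_infdist subspace_imp_convex by metis
  with \<open>subspace M\<close> show thesis
    using that subspace_closest_point_orthogonal by blast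
qed

lemma orthogonal_decomposition_unique:
  fixes M :: "'a::real_inner set"
  assumes "subspace M" "p \<in> M" "q \<in> M" "x - p \<in> M\<^sup>\<bottom>" "x - q \<in> M\<^sup>\<bottom>"
  shows "p = q"
proof -
  have "p - q \<in> M" using assms(1-3) by (simp add: subspace_diff)
  moreover have "p - q \<in> M\<^sup>\<bottom>"
    using subspace_diff[OF subspace_orthogonal_comp assms(5,4)] by simp
  ultimately have "orthogonal (p - q) (p - q)"
    by (simp add: orthogonal_comp_def)
  then show ?thesis by (simp add: orthogonal_self)
qed

lemma isometry_bounded_linear: "isometry T \<Longrightarrow> bounded_linear T"
  by (simp add: isometry_def)

lemma isometry_norm: "isometry T \<Longrightarrow> norm (T x) = norm x"
  by (simp add: isometry_def)

lemma isometry_inner: "isometry T \<Longrightarrow> inner (T x) (T y) = inner x y"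
  unfolding isometry_def
  by (metis bounded_linear.linear orthogonal_transformation orthogonal_transformation_def)

lemma isometry_id: "isometry id"
  by (simp add: isometry_def id_def)

lemma isometry_comp: "isometry A \<Longrightarrow> isometry B \<Longrightarrow> isometry (A \<circ> B)"
  unfolding isometry_def comp_def by (auto intro: bounded_linear_compose)

lemma isometry_funpow: "isometry T \<Longrightarrow> isometry (T ^^ n)"
  by (induction n) (simp_all add: isometry_id isometry_comp)

lemma subspace_range_isometry: "isometry T \<Longrightarrow> subspace (range T)"
  by (simp add: isometry_bounded_linear bounded_linear.linear linear_subspace_image)

lemma closed_range_isometry:
  fixes T :: "'a::{real_inner, complete_space} \<Rightarrow> 'a"
  assumes "isometry T"
  shows "closed (range T)"
proof -
  have "complete (T ` UNIV)"
    by (rule complete_isometric_image[of 1])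
      (simp_all add: assms isometry_bounded_linear isometry_norm complete_UNIV)
  then show ?thesis by (rule complete_imp_closed)
qed

lemma is_adjoint_comp: "is_adjoint A SA \<Longrightarrow> is_adjoint B SB \<Longrightarrow> is_adjoint (A \<circ> B) (SB \<circ> SA)"
  unfolding is_adjoint_def by simp

lemma is_adjoint_funpow: "is_adjoint T S \<Longrightarrow> is_adjoint (T ^^ n) (S ^^ n)"
proof (induction n)
  case (Suc n)
  then have "is_adjoint (T \<circ> T ^^ n) (S ^^ n \<circ> S)"
    by (simp add: is_adjoint_comp)
  then show ?case by (metis funpow.simps(2) funpow_Suc_right)
qed (simp add: is_adjoint_def)

lemma isometry_adjoint_orthogonal:
  assumes "isometry T" "is_adjoint T S"
  shows "x - T (S x) \<in> (range T)\<^sup>\<bottom>"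
  unfolding orthogonal_comp_def orthogonal_def
proof clarify
  fix y
  have "inner (T y) x = inner y (S x)" using assms(2) by (simp add: is_adjoint_def)
  then show "inner (T y) (x - T (S x)) = 0"
    by (simp add: inner_diff_right isometry_inner assms(1))
qed

lemma isometry_has_adjoint:
  fixes T :: "'a::{real_inner, complete_space} \<Rightarrow> 'a"
  assumes "isometry T"
  shows "\<exists>S. is_adjoint T S"
proof -
  have "\<exists>u. x - T u \<in> (range T)\<^sup>\<bottom>" for x
    using closed_subspace_orthogonal_decomposition[OF closed_range_isometry[OF assms]
        subspace_range_isometry[OF assms]] by blast
  then obtain S where S: "\<And>x. x - T (S x) \<in> (range T)\<^sup>\<bottom>" by metis
  have "inner (T y) x = inner y (S x)" for x y
  proof -
    have "inner (T y) x = inner (T y) (T (S x)) + inner (T y) (x - T (S x))"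
      by (simp add: inner_diff_right)
    also have "inner (T y) (x - T (S x)) = 0"
      using S[of x] by (auto simp: orthogonal_comp_def orthogonal_def)
    finally show ?thesis by (simp add: isometry_inner assms)
  qed
  then show ?thesis unfolding is_adjoint_def by blast
qed

lemma isometry_adjoint_norm_le:
  assumes "isometry T" "is_adjoint T S"
  shows "norm (S x) \<le> norm x"
proof -
  have "norm (S x)^2 = inner (T (S x)) x"
    using assms(2) by (simp add: is_adjoint_def power2_norm_eq_inner)
  also have "\<dots> \<le> norm (S x) * norm x"
    using Cauchy_Schwarz_ineq2[of "T (S x)" x] by (simp add: assms(1) isometry_norm)
  finally show ?thesis
    by (cases "S x = 0") (simp_all add: power2_eq_square)
qed

lemma isometry_adjoint_projection_eq:
  assumes "isometry A" "is_adjoint A SA" "isometry B" "is_adjoint B SB" "range A = range B"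
  shows "A (SA x) = B (SB x)"
  using orthogonal_decomposition_unique[OF subspace_range_isometry[OF \<open>isometry A\<close>]]
    isometry_adjoint_orthogonal[OF assms(1,2)] isometry_adjoint_orthogonal[OF assms(3,4)] assms(5)
  by (metis rangeI)

lemma comp_funpow_commute:
  assumes "f \<circ> g = g \<circ> f"
  shows "f \<circ> g ^^ n = g ^^ n \<circ> f"
proof (induction n)
  case (Suc n)
  have "f \<circ> g ^^ Suc n = (f \<circ> g) \<circ> g ^^ n"
    by (simp only: funpow.simps(2) comp_assoc)
  also have "\<dots> = g \<circ> (f \<circ> g ^^ n)"
    by (simp only: assms comp_assoc)
  also have "\<dots> = g ^^ Suc n \<circ> f"
    by (simp only: Suc.IH funpow.simps(2) comp_assoc)
  finally show ?case .
qed simp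

lemma funpow_comp_distrib:
  assumes "f \<circ> g = g \<circ> f"
  shows "(f \<circ> g) ^^ n = f ^^ n \<circ> g ^^ n"
proof (induction n)
  case (Suc n)
  have "(f \<circ> g) ^^ Suc n = f \<circ> (g \<circ> f ^^ n) \<circ> g ^^ n"
    by (simp only: funpow.simps(2) Suc.IH comp_assoc)
  also have "\<dots> = f ^^ Suc n \<circ> g ^^ Suc n"
    by (simp only: comp_funpow_commute[OF assms[symmetric]] funpow.simps(2) comp_assoc)
  finally show ?case .
qed simp

lemma range_funpow_eq:
  assumes "f \<circ> g = g \<circ> f" "range f = range g"
  shows "range (f ^^ n) = range (g ^^ n)"
proof (induction n)
  case (Suc n)
  have "range (f ^^ Suc n) = (f ^^ n) ` range g"
    by (simp only: funpow_Suc_right image_comp[symmetric] assms(2))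
  also have "\<dots> = g ` range (f ^^ n)"
    by (simp only: image_comp comp_funpow_commute[OF assms(1)[symmetric]])
  also have "\<dots> = range (g ^^ Suc n)"
    by (simp only: Suc.IH funpow.simps(2) image_comp)
  finally show ?case .
qed simp

lemma decseq_tendsto_of_subseq:
  fixes f :: "nat \<Rightarrow> real"
  assumes "decseq f" "strict_mono r" "(f \<circ> r) \<longlonglongrightarrow> l"
  shows "f \<longlonglongrightarrow> l"
proof -
  have "decseq (f \<circ> r)"
    using assms(1,2) by (simp add: decseq_def strict_mono_leD)
  then have "l \<le> f (r n)" for n
    using decseq_ge[OF _ assms(3)] by simp
  moreover have "f (r n) \<le> f n" for n
    using decseqD[OF assms(1) seq_suble[OF assms(2)]] .
  ultimately have "l \<le> f n" for n
    by (meson order_trans)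
  then obtain L where "f \<longlonglongrightarrow> L"
    using decseq_convergent[OF assms(1)] by blast
  with assms(2,3) show ?thesis
    using LIMSEQ_subseq_LIMSEQ LIMSEQ_unique by blast
qed

lemma pure_isometry_left_factor:
  fixes V1 V2 :: "'a::{real_inner, complete_space} \<Rightarrow> 'a"
  assumes iso1: "isometry V1" and iso2: "isometry V2"
    and comm: "V1 \<circ> V2 = V2 \<circ> V1" and ran: "range V1 = range V2"
    and pure: "pure_isometry (V1 \<circ> V2)"
  shows "pure_isometry V1"
proof -
  obtain S where adj: "is_adjoint (V1 \<circ> V2) S" and lim: "\<And>x. (\<lambda>n. (S ^^ n) x) \<longlonglongrightarrow> 0"
    using pure unfolding pure_isometry_def by blast
  have isoW: "isometry (V1 \<circ> V2)"
    using isometry_comp[OF iso1 iso2] .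
  obtain S1 where adj1: "is_adjoint V1 S1"
    using isometry_has_adjoint[OF iso1] by blast
  have ran_pow: "range (V1 ^^ (2 * n)) = range ((V1 \<circ> V2) ^^ n)" for n
  proof -
    have "range (V1 ^^ (2 * n)) = (V1 ^^ n) ` range (V1 ^^ n)"
      by (simp only: mult_2 funpow_add image_comp)
    also have "\<dots> = range ((V1 \<circ> V2) ^^ n)"
      by (simp only: range_funpow_eq[OF comm ran] funpow_comp_distrib[OF comm] image_comp)
    finally show ?thesis .
  qed
  have norm_pow: "norm ((S1 ^^ (2 * n)) x) = norm ((S ^^ n) x)" for n x
  proof -
    have "(V1 ^^ (2 * n)) ((S1 ^^ (2 * n)) x) = ((V1 \<circ> V2) ^^ n) ((S ^^ n) x)"
      by (rule isometry_adjoint_projection_eq[OF isometry_funpow[OF iso1] is_adjoint_funpow[OF adj1]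
            isometry_funpow[OF isoW] is_adjoint_funpow[OF adj] ran_pow])
    then show ?thesis
      by (metis isometry_norm isometry_funpow iso1 isoW)
  qed
  have "(\<lambda>n. norm ((S1 ^^ n) x)) \<longlonglongrightarrow> 0" for x
  proof (rule decseq_tendsto_of_subseq)
    show "decseq (\<lambda>n. norm ((S1 ^^ n) x))"
      by (rule decseq_SucI) (simp add: isometry_adjoint_norm_le[OF iso1 adj1])
    show "strict_mono (\<lambda>n. 2 * n :: nat)"
      by (simp add: strict_mono_def)
    show "((\<lambda>n. norm ((S1 ^^ n) x)) \<circ> (\<lambda>n. 2 * n)) \<longlonglongrightarrow> 0"
      using tendsto_norm_zero[OF lim] by (simp add: comp_def norm_pow)
  qed
  then show ?thesis
    unfolding pure_isometry_def using iso1 adj1 tendsto_norm_zero_iff by blast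
qed

theorem corollary5p5:
  fixes V1 V2 :: "'a::{real_inner, complete_space} \<Rightarrow> 'a"
  assumes "isometry V1" and "isometry V2"
    and "V1 \<circ> V2 = V2 \<circ> V1"
    and "range V1 = range V2"
    and "pure_isometry (V1 \<circ> V2)"
  shows "pure_isometry V1 \<and> pure_isometry V2"
proof
  show "pure_isometry V1"
    by (rule pure_isometry_left_factor) (use assms in auto)
  show "pure_isometry V2"
    by (rule pure_isometry_left_factor[of V2 V1]) (use assms in auto)
qed

end
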